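(* Let $\bar j\in\{1,\dots,\bar d\}$ and $z\in\mathbb R^{\bar d}$ with $\mathrm{supp}(z)\subset\{1,\dots,\bar j-1\}$. Then: (1) if $\bar j=1$, then $\mathrm{supp}(z)=\emptyset$, $z=0$, and $\mathrm{supp}(\nabla f_i(z))\subset\{1\}$ for every $i\in[1,m]$; (2) if $\bar j$ is even, then $\mathrm{supp}(\nabla f_i(z))\subset\{1,\dots,\bar j\}$ for $i\in[1,\frac m3]$ and $\mathrm{supp}(\nabla f_i(z))\subset\{1,\dots,\bar j-1\}$ for $i\in[\frac m3+1,m]$; (3) if $\bar j$ is odd and $\bar j\ne1$, then $\mathrm{supp}(\nabla f_i(z))\subset\{1,\dots,\bar j-1\}$ for $i\in[1,\frac{2m}3]$ and $\mathrm{supp}(\nabla f_i(z))\subset\{1,\dots,\bar j\}$ for $i\in[\frac{2m}3+1,m]$.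
   Context: $\mathrm{supp}(z)=\{j:[z]_j\ne0\}$, $[z]_j$ the $j$-th coordinate. Fix $\epsilon\in(0,1)$, $L_f>0$, integers $m_1\ge2$, $m_2\ge1$ with $m_1m_2$ even, $m=3m_1m_2$, an odd integer $\bar d\ge5$. $\Psi(u)=0$ ($u\le0$), $1-e^{-u^2}$ ($u>0$); $\Phi(v)=4\arctan v+2\pi$. For $z\in\mathbb R^{\bar d}$: $\varphi(z,1)=-\Psi(1)\Phi([z]_1)$, $\varphi(z,j)=\Psi(-[z]_{j-1})\Phi(-[z]_j)-\Psi([z]_{j-1})\Phi([z]_j)$ ($2\le j\le\bar d$); $h_i(z)=\varphi(z,1)+3\sum_{j=1}^{\lfloor\bar d/2\rfloor}\varphi(z,2j)$ for $1\le i\le m/3$, $h_i(z)=\varphi(z,1)$ for $m/3+1\le i\le 2m/3$, $h_i(z)=\varphi(z,1)+3\sum_{j=1}^{\lfloor\bar d/2\rfloor}\varphi(z,2j+1)$ for $2m/3+1\le i\le m$. $f_i(z)=\frac{300\pi\epsilon^2}{mL_f}h_i(\frac{\sqrt mL_fz}{150\pi\epsilon})$. *)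

theory Defs
  imports "HOL-Analysis.Analysis"
begin

text \<open>Vectors in R^dbar are represented as functions nat => real, coordinates 1..dbar.\<close>

definition Psi :: "real \<Rightarrow> real" where
  "Psi u = (if u \<le> 0 then 0 else 1 - exp (- (u\<^sup>2)))"

definition Phi :: "real \<Rightarrow> real" where
  "Phi v = 4 * arctan v + 2 * pi"

definition varphi :: "(nat \<Rightarrow> real) \<Rightarrow> nat \<Rightarrow> real" where
  "varphi z j = (if j = 1 then - Psi 1 * Phi (z 1)
     else Psi (- z (j - 1)) * Phi (- z j) - Psi (z (j - 1)) * Phi (z j))"

definition hfun :: "nat \<Rightarrow> nat \<Rightarrow> nat \<Rightarrow> (nat \<Rightarrow> real) \<Rightarrow> real" where
  "hfun m dbar i z =
    (if i \<le> m div 3 then varphi z 1 + 3 * (\<Sum>j=1..dbar div 2. varphi z (2*j))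
     else if i \<le> 2 * m div 3 then varphi z 1
     else varphi z 1 + 3 * (\<Sum>j=1..dbar div 2. varphi z (2*j+1)))"

definition ffun :: "real \<Rightarrow> real \<Rightarrow> nat \<Rightarrow> nat \<Rightarrow> nat \<Rightarrow> (nat \<Rightarrow> real) \<Rightarrow> real" where
  "ffun eps Lf m dbar i z =
    300 * pi * eps\<^sup>2 / (real m * Lf) *
      hfun m dbar i (\<lambda>j. sqrt (real m) * Lf * z j / (150 * pi * eps))"

definition supp :: "nat \<Rightarrow> (nat \<Rightarrow> real) \<Rightarrow> nat set" where
  "supp d z = {j \<in> {1..d}. z j \<noteq> 0}"

definition grad :: "nat \<Rightarrow> ((nat \<Rightarrow> real) \<Rightarrow> real) \<Rightarrow> (nat \<Rightarrow> real) \<Rightarrow> (nat \<Rightarrow> real)" where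
  "grad d F z = (\<lambda>j. if j \<in> {1..d} then deriv (\<lambda>t. F (z(j := t))) (z j) else 0)"

end

theory Submission
  imports Defs
begin

text \<open>
  For k \<ge> 2 the coordinate z_k enters f_i only through varphi(., k) and varphi(., k+1), both
  built from Psi(\<plusminus>z_(k-1)) and Psi(\<plusminus>z_k). As |Psi u| <= u^2, Psi and Psi' vanish at 0, so at a
  point with z_k = 0 the term varphi(., k+1) has zero k-th partial derivative, and so does
  varphi(., k) once also z_(k-1) = 0. Hence if supp z \<subseteq> {1..<jbar}, every partial derivative
  beyond jbar vanishes, and the one at jbar vanishes unless h_i contains varphi(., jbar), i.e.
  unless i lies in the first third (jbar even) or the last third (jbar odd).
\<close>

lemma has_real_derivative_zero_if_abs_le_square:
  fixes f :: "real \<Rightarrow> real"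
  assumes bound: "\<And>x. \<bar>f x\<bar> \<le> x\<^sup>2"
  shows "(f has_real_derivative 0) (at 0)"
proof -
  have f0: "f 0 = 0"
    using bound[of 0] by simp
  have "((\<lambda>h. f h / h) \<longlongrightarrow> 0) (at 0)"
  proof (rule Lim_null_comparison)
    show "\<forall>\<^sub>F h in at 0. norm (f h / h) \<le> \<bar>h\<bar>"
    proof (rule always_eventually, rule allI)
      fix h :: real
      have "\<bar>f h\<bar> \<le> \<bar>h\<bar> * \<bar>h\<bar>"
        using bound[of h] by (simp add: power2_eq_square abs_mult)
      then show "norm (f h / h) \<le> \<bar>h\<bar>"
        by (cases "h = 0") (simp_all add: divide_simps abs_divide)
    qed
    show "((\<lambda>h. \<bar>h\<bar>) \<longlongrightarrow> 0) (at (0::real))"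
      using tendsto_rabs[OF tendsto_ident_at, of 0 UNIV] by simp
  qed
  then show ?thesis
    by (simp add: DERIV_def f0)
qed

lemma Psi_zero [simp]: "Psi 0 = 0"
  by (simp add: Psi_def)

lemma abs_Psi_le_square: "\<bar>Psi u\<bar> \<le> u\<^sup>2"
proof (cases "u \<le> 0")
  case False
  have "1 - u\<^sup>2 \<le> exp (- u\<^sup>2)"
    using exp_ge_add_one_self[of "- u\<^sup>2"] by simp
  then show ?thesis
    using False by (simp add: Psi_def)
qed (simp add: Psi_def)

lemma Psi_has_real_derivative_zero: "(Psi has_real_derivative 0) (at 0)"
  using has_real_derivative_zero_if_abs_le_square abs_Psi_le_square .

lemma varphi_partial_derivative_zero:
  assumes "2 \<le> k" and "j = k \<Longrightarrow> w (k - 1) = 0"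
  shows "((\<lambda>t. varphi (w(k := t)) j) has_real_derivative 0) (at 0)"
proof -
  consider "j = k" | "j = k + 1" | "j \<noteq> k" "j \<noteq> k + 1" by blast
  then show ?thesis
  proof cases
    case 1
    moreover have "k - 1 \<noteq> k"
      using assms(1) by simp
    ultimately have "(\<lambda>t. varphi (w(k := t)) j) = (\<lambda>t. 0)"
      using assms by (auto simp: varphi_def)
    then show ?thesis by simp
  next
    case 2
    then have eq: "(\<lambda>t. varphi (w(k := t)) j) = (\<lambda>t. Psi (- t) * Phi (- w j) - Psi t * Phi (w j))"
      using assms by (auto simp: varphi_def)
    have "((\<lambda>t. Psi (- t)) has_real_derivative 0 * (- 1)) (at 0)"
      by (rule DERIV_chain2[where f = Psi])
        (auto intro!: derivative_eq_intros simp: Psi_has_real_derivative_zero)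
    then have "((\<lambda>t. Psi (- t) * Phi (- w j) - Psi t * Phi (w j))
        has_real_derivative 0 * (- 1) * Phi (- w j) - 0 * Phi (w j)) (at 0)"
      by (intro DERIV_diff DERIV_cmult_right Psi_has_real_derivative_zero)
    then show ?thesis
      using eq by simp
  next
    case 3
    moreover have "j - 1 \<noteq> k"
      using 3 assms(1) by auto
    ultimately have "(\<lambda>t. varphi (w(k := t)) j) = (\<lambda>t. varphi w j)"
      using assms by (auto simp: varphi_def)
    then show ?thesis by simp
  qed
qed

text \<open>
  Holds whenever h_i contains varphi(., k), the only term of h_i coupling the coordinates
  k - 1 and k (it also holds for some k > dbar, which is harmless).
\<close>
definition hfun_links :: "nat \<Rightarrow> nat \<Rightarrow> nat \<Rightarrow> bool" where
  "hfun_links m i k \<longleftrightarrow> (i \<le> m div 3 \<and> even k) \<or> (2 * m div 3 < i \<and> odd k)"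

lemma hfun_partial_derivative_zero:
  assumes "2 \<le> k" and "hfun_links m i k \<Longrightarrow> w (k - 1) = 0"
  shows "((\<lambda>t. hfun m dbar i (w(k := t))) has_real_derivative 0) (at 0)"
proof -
  have term_deriv: "((\<lambda>t. varphi (w(k := t)) j) has_real_derivative 0) (at 0)"
    if "j = k \<Longrightarrow> hfun_links m i k" for j
    using varphi_partial_derivative_zero assms that by blast
  have sum_deriv: "((\<lambda>t. varphi (w(k := t)) 1 + 3 * (\<Sum>j\<in>J. varphi (w(k := t)) (g j)))
      has_real_derivative 0) (at 0)"
    if "\<And>j. g j = k \<Longrightarrow> hfun_links m i k" for g and J :: "nat set"
  proof -
    have "((\<lambda>t. varphi (w(k := t)) 1 + 3 * (\<Sum>j\<in>J. varphi (w(k := t)) (g j)))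
        has_real_derivative 0 + 3 * (\<Sum>j\<in>J. 0)) (at 0)"
      using assms(1) that
      by (intro DERIV_add DERIV_cmult DERIV_sum term_deriv) auto
    then show ?thesis by simp
  qed
  consider "i \<le> m div 3" | "\<not> i \<le> m div 3" "i \<le> 2 * m div 3" | "2 * m div 3 < i"
    by linarith
  then show ?thesis
  proof cases
    case 1
    then have "hfun_links m i k" if "2 * j = k" for j
      using that by (auto simp: hfun_links_def)
    from sum_deriv[of "\<lambda>j. 2 * j" "{1..dbar div 2}", OF this] show ?thesis
      using 1 by (simp add: hfun_def)
  next
    case 2
    then show ?thesis
      using term_deriv[of 1] assms(1) by (simp add: hfun_def)
  next
    case 3
    then have "hfun_links m i k" if "2 * j + 1 = k" for j
      using that by (auto simp: hfun_links_def)
    from sum_deriv[of "\<lambda>j. 2 * j + 1" "{1..dbar div 2}", OF this] show ?thesis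
      using 3 div_le_mono[of m "2 * m" 3] by (simp add: hfun_def)
  qed
qed

lemma grad_ffun_eq_zero:
  assumes "k \<in> {1..dbar}" "2 \<le> k" "z k = 0"
    and "hfun_links m i k \<Longrightarrow> z (k - 1) = 0"
  shows "grad dbar (ffun eps Lf m dbar i) z k = 0"
proof -
  define a where "a = sqrt (real m) * Lf / (150 * pi * eps)"
  define C where "C = 300 * pi * eps\<^sup>2 / (real m * Lf)"
  define w where "w = (\<lambda>j. a * z j)"
  have ffun_eq: "(\<lambda>t. ffun eps Lf m dbar i (z(k := t))) = (\<lambda>t. C * hfun m dbar i (w(k := a * t)))"
  proof
    fix t
    have "(\<lambda>j. sqrt (real m) * Lf * (z(k := t)) j / (150 * pi * eps)) = w(k := a * t)"
      by (auto simp: w_def a_def)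
    then show "ffun eps Lf m dbar i (z(k := t)) = C * hfun m dbar i (w(k := a * t))"
      by (simp add: ffun_def C_def)
  qed
  have "((\<lambda>u. hfun m dbar i (w(k := u))) has_real_derivative 0) (at (a * 0))"
    using hfun_partial_derivative_zero[of k m i w dbar] assms by (simp add: w_def)
  then have "((\<lambda>t. hfun m dbar i (w(k := a * t))) has_real_derivative 0 * a) (at 0)"
    by (rule DERIV_chain2[where g = "\<lambda>t. a * t"]) (auto intro!: derivative_eq_intros)
  then have "((\<lambda>t. C * hfun m dbar i (w(k := a * t))) has_real_derivative C * 0) (at 0)"
    by (intro DERIV_cmult) simp
  then have "((\<lambda>t. ffun eps Lf m dbar i (z(k := t))) has_real_derivative 0) (at (z k))"
    using ffun_eq assms(3) by simp
  then show ?thesis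
    using assms(1) by (simp add: grad_def DERIV_imp_deriv)
qed

lemma supp_grad_ffun_subset_atMost:
  assumes "\<And>k. jbar \<le> k \<Longrightarrow> z k = 0" and "1 \<le> jbar"
  shows "supp dbar (grad dbar (ffun eps Lf m dbar i) z) \<subseteq> {1..jbar}"
proof
  fix k
  assume k: "k \<in> supp dbar (grad dbar (ffun eps Lf m dbar i) z)"
  then have "k \<in> {1..dbar}"
    by (simp add: supp_def)
  have "\<not> jbar < k"
  proof
    assume "jbar < k"
    then have "grad dbar (ffun eps Lf m dbar i) z k = 0"
      using \<open>k \<in> {1..dbar}\<close> assms by (intro grad_ffun_eq_zero) auto
    then show False
      using k by (simp add: supp_def)
  qed
  then show "k \<in> {1..jbar}"
    using \<open>k \<in> {1..dbar}\<close> by simp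
qed

lemma supp_grad_ffun_subset_lessThan:
  assumes "\<And>k. jbar \<le> k \<Longrightarrow> z k = 0" and "2 \<le> jbar" and "\<not> hfun_links m i jbar"
  shows "supp dbar (grad dbar (ffun eps Lf m dbar i) z) \<subseteq> {1..<jbar}"
proof
  fix k
  assume k: "k \<in> supp dbar (grad dbar (ffun eps Lf m dbar i) z)"
  then have "k \<in> {1..jbar}"
    using supp_grad_ffun_subset_atMost[of jbar z dbar eps Lf m i] assms(1,2) by auto
  have "k \<noteq> jbar"
  proof
    assume "k = jbar"
    moreover have "k \<in> {1..dbar}"
      using k by (simp add: supp_def)
    ultimately have "grad dbar (ffun eps Lf m dbar i) z k = 0"
      using assms by (intro grad_ffun_eq_zero) auto
    then show False
      using k by (simp add: supp_def)
  qed
  then show "k \<in> {1..<jbar}"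
    using \<open>k \<in> {1..jbar}\<close> by simp
qed

theorem lemma7:
  fixes eps Lf :: real and m1 m2 dbar jbar :: nat and z :: "nat \<Rightarrow> real"
  defines "m \<equiv> 3 * m1 * m2"
  assumes "0 < eps" "eps < 1" "0 < Lf" "2 \<le> m1" "1 \<le> m2" "even (m1 * m2)"
    and "odd dbar" "5 \<le> dbar"
    and "jbar \<in> {1..dbar}"
    and "\<forall>j. j \<notin> {1..dbar} \<longrightarrow> z j = 0"
    and "supp dbar z \<subseteq> {1..<jbar}"
  shows "(jbar = 1 \<longrightarrow> supp dbar z = {} \<and> z = (\<lambda>_. 0) \<and>
            (\<forall>i\<in>{1..m}. supp dbar (grad dbar (ffun eps Lf m dbar i) z) \<subseteq> {1}))
       \<and> (even jbar \<longrightarrow>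
            (\<forall>i\<in>{1..m div 3}. supp dbar (grad dbar (ffun eps Lf m dbar i) z) \<subseteq> {1..jbar}) \<and>
            (\<forall>i\<in>{m div 3 + 1..m}. supp dbar (grad dbar (ffun eps Lf m dbar i) z) \<subseteq> {1..<jbar}))
       \<and> (odd jbar \<and> jbar \<noteq> 1 \<longrightarrow>
            (\<forall>i\<in>{1..2 * m div 3}. supp dbar (grad dbar (ffun eps Lf m dbar i) z) \<subseteq> {1..<jbar}) \<and>
            (\<forall>i\<in>{2 * m div 3 + 1..m}. supp dbar (grad dbar (ffun eps Lf m dbar i) z) \<subseteq> {1..jbar}))"
proof -
  have tail: "z k = 0" if "jbar \<le> k" for k
    using assms(11,12) that unfolding supp_def by (cases "k \<in> {1..dbar}") auto
  have jbar_one: "z = (\<lambda>_. 0)" if "jbar = 1"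
  proof
    show "z k = 0" for k
      using tail[of k] assms(11) that by (cases "k = 0") auto
  qed
  have upto: "supp dbar (grad dbar (ffun eps Lf m dbar i) z) \<subseteq> {1..jbar}" for i
    using tail assms(10) by (intro supp_grad_ffun_subset_atMost) auto
  have below: "supp dbar (grad dbar (ffun eps Lf m dbar i) z) \<subseteq> {1..<jbar}"
    if "jbar \<noteq> 1" and "\<not> hfun_links m i jbar" for i
    using tail that assms(10) by (intro supp_grad_ffun_subset_lessThan) auto
  show ?thesis
  proof (intro conjI impI ballI)
    assume "jbar = 1"
    then show "supp dbar z = {}" and "z = (\<lambda>_. 0)"
      using jbar_one by (simp_all add: supp_def)
    show "supp dbar (grad dbar (ffun eps Lf m dbar i) z) \<subseteq> {1}" for i
      using upto[of i] \<open>jbar = 1\<close> by simp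
  next
    fix i
    assume "even jbar" and "i \<in> {m div 3 + 1..m}"
    then show "supp dbar (grad dbar (ffun eps Lf m dbar i) z) \<subseteq> {1..<jbar}"
      by (intro below) (auto simp: hfun_links_def)
  next
    fix i
    assume "odd jbar \<and> jbar \<noteq> 1" and "i \<in> {1..2 * m div 3}"
    then show "supp dbar (grad dbar (ffun eps Lf m dbar i) z) \<subseteq> {1..<jbar}"
      by (intro below) (auto simp: hfun_links_def)
  qed (rule upto)+
qed

end
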